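(* Let $P$ be any prior distribution over $\mathcal F$, let $c>0$, $h\in(0,1)$ and $\delta\in(0,1)$, and set $C=\frac{2h^4c}{1+16h^2c}$. Then with probability at least $1-\delta$ over $S=(z_1,\dots,z_m)\sim\mathcal D^m$, simultaneously for all distributions $Q$ over $\mathcal F$, $$\mathcal L_{\mathcal D}(Q)\;\le\;\hat{\mathcal L}_S(Q)+\frac{c}{m}\sum_{i=1}^m\mathbb E_{f\sim Q}\big[f(z_i)-(1+h)\,\ell_Q(z_i)\big]^2+\frac{4}{Cm}\Big[3\,\mathrm{KL}(Q\|P)+\log\frac1\delta+5\Big].$$
   Context: Let $(\mathcal Z,\Sigma)$ be a measurable space and $\mathcal D$ a probability distribution on $\mathcal Z$. Let $\mathcal F$ be a class of measurable functions $f:\mathcal Z\to\{0,1\}$ (a zero–one loss class), equipped with a $\sigma$-algebra for which $(f,z)\mapsto f(z)$ is jointly measurable; "distributions over $\mathcal F$" are probability measures on this $\sigma$-algebra. A sample $S=(z_1,\dots,z_m)\sim\mathcal D^m$ consists of i.i.d. draws from $\mathcal D$. For $f\in\mathcal F$: $\mathcal L_{\mathcal D}(f)=\mathbb E_{z\sim\mathcal D}f(z)$ and $\hat{\mathcal L}_S(f)=\frac1m\sum_{i=1}^m f(z_i)$. For a distribution $Q$ over $\mathcal F$ and $z\in\mathcal Z$, write $\ell_Q(z)=\mathbb E_{f\sim Q}f(z)$; the Gibbs risk is $\mathcal L_{\mathcal D}(Q)=\mathbb E_{f\sim Q}\mathcal L_{\mathcal D}(f)$ and the Gibbs empirical risk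 is $\hat{\mathcal L}_S(Q)=\frac1m\sum_{i=1}^m\ell_Q(z_i)$. $\mathrm{KL}(Q\|P)$ denotes the relative entropy, equal to $+\infty$ unless $Q\ll P$. The prior $P$ is fixed independently of $S$. The quantity $\frac1m\sum_{i=1}^m\mathbb E_{f\sim Q}[f(z_i)-(1+h)\ell_Q(z_i)]^2$ is called the $h$-flatness of $Q$ with respect to $S$. *)

theory Defs
  imports "HOL-Probability.Probability"
begin

text \<open>Relative entropy KL(Q||P) with values in extended reals (natural logarithm):
  +infinity unless Q is absolutely continuous w.r.t. P and log(dQ/dP) is Q-integrable
  (for probability measures, non-integrability forces the value +infinity, because the
  negative part of g log g is bounded).\<close>
definition KL :: "'a measure \<Rightarrow> 'a measure \<Rightarrow> ereal" where
  "KL Q P = (if absolutely_continuous P Q \<and> integrable Q (entropy_density (exp 1) P Q)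
             then ereal (KL_divergence (exp 1) P Q) else \<infinity>)"

definition gibbs_loss :: "('z \<Rightarrow> real) measure \<Rightarrow> 'z \<Rightarrow> real" where
  "gibbs_loss Q z = (\<integral>f. f z \<partial>Q)"

definition true_risk :: "'z measure \<Rightarrow> ('z \<Rightarrow> real) \<Rightarrow> real" where
  "true_risk D f = (\<integral>z. f z \<partial>D)"

definition gibbs_risk :: "'z measure \<Rightarrow> ('z \<Rightarrow> real) measure \<Rightarrow> real" where
  "gibbs_risk D Q = (\<integral>f. true_risk D f \<partial>Q)"

definition emp_gibbs_risk :: "('z \<Rightarrow> real) measure \<Rightarrow> nat \<Rightarrow> (nat \<Rightarrow> 'z) \<Rightarrow> real" where
  "emp_gibbs_risk Q m S = (1 / real m) * (\<Sum>i<m. gibbs_loss Q (S i))"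

definition flatness :: "real \<Rightarrow> ('z \<Rightarrow> real) measure \<Rightarrow> nat \<Rightarrow> (nat \<Rightarrow> 'z) \<Rightarrow> real" where
  "flatness h Q m S = (1 / real m) *
     (\<Sum>i<m. \<integral>f. (f (S i) - (1 + h) * gibbs_loss Q (S i))\<^sup>2 \<partial>Q)"

end

theory Submission
  imports Defs
begin

text \<open>Write \<open>x = c h\<^sup>2\<close> and \<open>t = x / (1 + x)\<close>. For a single \<open>{0,1}\<close>-valued loss \<open>f\<close>, the
  exponential moment of \<open>t L\<^sub>D(f) - x f(z)\<close> over \<open>z \<sim> D\<close> is at most \<open>exp (L\<^sub>D(f) (t - 1 + e\<^sup>-\<^sup>x)) \<le> 1\<close>,
  so over an i.i.d. sample the moment of \<open>t m L\<^sub>D(f) - x m L\<^sub>S(f)\<close> is at most 1 as well. By Tonelli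
  and Markov, outside an event of probability \<open>\<delta>\<close> its \<open>P\<close>-average is below \<open>1/\<delta>\<close>, and the
  Donsker--Varadhan change of measure turns this into
  \<open>t m L\<^sub>D(Q) - x m L\<^sub>S(Q) \<le> KL(Q||P) + ln (1/\<delta>)\<close> for every \<open>Q\<close> simultaneously. Dividing by \<open>t m\<close>
  leaves the excess \<open>x L\<^sub>S(Q)\<close>, which the flatness absorbs: for \<open>{0,1}\<close>-valued losses
  \<open>E\<^sub>Q (f(z) - (1 + h) \<ell>\<^sub>Q(z))\<^sup>2 = h\<^sup>2 \<ell>\<^sub>Q(z) + (1 - h\<^sup>2) \<ell>\<^sub>Q(z) (1 - \<ell>\<^sub>Q(z)) \<ge> h\<^sup>2 \<ell>\<^sub>Q(z)\<close>.
  Finally \<open>1/t \<le> 4/C\<close>; the stated \<open>3 KL + 5\<close> is slack.\<close>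

lemma nn_integral_exp_minus_entropy_density:
  assumes P: "sigma_finite_measure P" and Q: "sigma_finite_measure Q"
    and sets_eq: "sets Q = sets P" and ac: "absolutely_continuous P Q"
    and y_meas: "y \<in> borel_measurable P"
  shows "(\<integral>\<^sup>+x. ennreal (exp (y x - entropy_density (exp 1) P Q x)) \<partial>Q)
           \<le> (\<integral>\<^sup>+x. ennreal (exp (y x)) \<partial>P)"
proof -
  interpret P: sigma_finite_measure P by fact
  define r where "r = RN_deriv P Q"
  have "(\<integral>\<^sup>+x. ennreal (exp (y x - entropy_density (exp 1) P Q x)) \<partial>Q)
      = (\<integral>\<^sup>+x. ennreal (exp (y x - entropy_density (exp 1) P Q x)) \<partial>density P r)"
    using P.density_RN_deriv[OF ac sets_eq] by (simp add: r_def)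
  also have "\<dots> = (\<integral>\<^sup>+x. r x * ennreal (exp (y x - entropy_density (exp 1) P Q x)) \<partial>P)"
    using y_meas by (intro nn_integral_density) (auto simp: r_def)
  also have "\<dots> \<le> (\<integral>\<^sup>+x. ennreal (exp (y x)) \<partial>P)"
  proof (rule nn_integral_mono_AE)
    show "AE x in P. r x * ennreal (exp (y x - entropy_density (exp 1) P Q x)) \<le> ennreal (exp (y x))"
      using P.RN_deriv_finite[OF Q ac sets_eq]
    proof eventually_elim
      case (elim x)
      show ?case
      proof (cases "r x = 0")
        case False
        then have pos: "0 < enn2real (r x)" and r: "r x = ennreal (enn2real (r x))"
          using elim by (auto simp: r_def enn2real_positive_iff less_top[symmetric] zero_less_iff_neq_zero)
        have "entropy_density (exp 1) P Q x = ln (enn2real (r x))"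
          by (simp add: entropy_density_def r_def log_def)
        then have "enn2real (r x) * exp (y x - entropy_density (exp 1) P Q x) = exp (y x)"
          using pos by (simp add: exp_diff)
        then show ?thesis using pos by (subst r) (simp add: ennreal_mult'[symmetric])
      qed simp
    qed
  qed
  finally show ?thesis .
qed

lemma KL_ge_integral:
  assumes P: "prob_space P" and Q: "prob_space Q" and sets_eq: "sets Q = sets P"
    and y_meas: "y \<in> borel_measurable P" and y_bounded: "\<And>x. x \<in> space P \<Longrightarrow> \<bar>y x\<bar> \<le> B"
    and exp_y: "(\<integral>\<^sup>+x. ennreal (exp (y x)) \<partial>P) \<le> 1"
  shows "ereal (\<integral>x. y x \<partial>Q) \<le> KL Q P"
proof (cases "absolutely_continuous P Q \<and> integrable Q (entropy_density (exp 1) P Q)")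
  case True
  interpret P: prob_space P by fact
  interpret Q: prob_space Q by fact
  define e where "e = entropy_density (exp 1) P Q"
  have e_int: "integrable Q e" using True by (simp add: e_def)
  have y_meas_Q: "y \<in> borel_measurable Q" using y_meas sets_eq by (simp cong: measurable_cong_sets)
  have y_int: "integrable Q y"
    using y_bounded sets_eq_imp_space_eq[OF sets_eq]
    by (intro Q.integrable_const_bound[where B=B] y_meas_Q) auto
  have nn: "(\<integral>\<^sup>+x. ennreal (exp (y x - e x)) \<partial>Q) \<le> 1"
    unfolding e_def using True y_meas exp_y
    by (intro order.trans[OF nn_integral_exp_minus_entropy_density[OF
          P.sigma_finite_measure_axioms Q.sigma_finite_measure_axioms sets_eq]]) auto
  have exp_meas: "(\<lambda>x. exp (y x - e x)) \<in> borel_measurable Q"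
    using y_meas_Q e_int by measurable
  have exp_int: "integrable Q (\<lambda>x. exp (y x - e x))"
    using nn exp_meas by (intro integrableI_bounded) (auto simp: top.not_eq_extremum
        intro: le_less_trans[OF _ ennreal_less_top[of 1]])
  have "(\<integral>x. exp (y x - e x) \<partial>Q) \<le> 1"
    using nn exp_int exp_meas by (subst integral_eq_nn_integral) (auto simp: enn2real_leI)
  moreover have "(\<integral>x. y x - e x \<partial>Q) \<le> (\<integral>x. exp (y x - e x) - 1 \<partial>Q)"
    using y_int e_int exp_int
    by (intro integral_mono) (auto simp: le_diff_eq intro: order.trans[OF _ exp_ge_add_one_self])
  ultimately have "(\<integral>x. y x \<partial>Q) \<le> (\<integral>x. e x \<partial>Q)"
    using y_int e_int exp_int by (simp add: Q.prob_space)
  then show ?thesis using True by (simp add: KL_def KL_divergence_def e_def)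
qed (auto simp: KL_def)

lemma KL_nonneg:
  assumes P: "prob_space P" and "prob_space Q" "sets Q = sets P"
  shows "0 \<le> KL Q P"
  using KL_ge_integral[OF assms, of "\<lambda>_. 0" 0]
  by (simp add: prob_space.emeasure_space_1[OF P] zero_ereal_def)

lemma (in prob_space) Markov_prob_mult_lt_1:
  assumes "Y \<in> borel_measurable M" "(\<integral>\<^sup>+x. Y x \<partial>M) \<le> 1" "0 < \<delta>"
  shows "1 - \<delta> \<le> prob {x \<in> space M. ennreal \<delta> * Y x < 1}"
proof -
  let ?A = "{x \<in> space M. ennreal \<delta> * Y x < 1}"
  have A_sets: "?A \<in> events" using assms(1) by measurable
  have "emeasure M (space M - ?A) \<le> ennreal \<delta> * (\<integral>\<^sup>+x. Y x * indicator (space M) x \<partial>M)"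
    using assms(1) by (intro order.trans[OF _ nn_integral_Markov_inequality]) (auto intro!: emeasure_mono)
  also have "\<dots> \<le> ennreal \<delta>"
    using assms(2) by (simp add: nn_integral_cong[of M "\<lambda>x. Y x * indicator (space M) x" Y] mult_left_le)
  finally show ?thesis
    using prob_compl[OF A_sets] \<open>0 < \<delta>\<close> by (simp add: emeasure_eq_measure ennreal_le_iff)
qed

lemma pac_bayes_bound:
  assumes M: "prob_space M" and P: "prob_space P" and "0 < \<delta>"
    and Phi_meas: "(\<lambda>(S, f). Phi S f) \<in> borel_measurable (M \<Otimes>\<^sub>M P)"
    and Phi_bounded: "\<And>S. S \<in> space M \<Longrightarrow> \<exists>B. \<forall>f\<in>space P. \<bar>Phi S f\<bar> \<le> B"
    and exp_moment: "\<And>f. f \<in> space P \<Longrightarrow> (\<integral>\<^sup>+S. ennreal (exp (Phi S f)) \<partial>M) \<le> 1"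
  shows "\<exists>A\<in>sets M. 1 - \<delta> \<le> measure M A \<and>
           (\<forall>S\<in>A. \<forall>Q. prob_space Q \<and> sets Q = sets P \<longrightarrow>
              ereal (\<integral>f. Phi S f \<partial>Q) \<le> KL Q P + ereal (ln (1 / \<delta>)))"
proof -
  interpret M: prob_space M by fact
  interpret P: prob_space P by fact
  interpret MP: pair_sigma_finite M P ..
  have exp_Phi_meas: "(\<lambda>(S, f). ennreal (exp (Phi S f))) \<in> borel_measurable (M \<Otimes>\<^sub>M P)"
    using Phi_meas by (simp add: split_beta')
  define Y where "Y S = (\<integral>\<^sup>+f. ennreal (exp (Phi S f)) \<partial>P)" for S
  have [measurable]: "Y \<in> borel_measurable M"
    unfolding Y_def using P.borel_measurable_nn_integral[OF exp_Phi_meas] by simp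
  have "(\<integral>\<^sup>+S. Y S \<partial>M) = (\<integral>\<^sup>+f. (\<integral>\<^sup>+S. ennreal (exp (Phi S f)) \<partial>M) \<partial>P)"
    unfolding Y_def by (rule MP.Fubini'[OF exp_Phi_meas, symmetric])
  also have "\<dots> \<le> (\<integral>\<^sup>+f. 1 \<partial>P)"
    using exp_moment by (intro nn_integral_mono) auto
  finally have EY: "(\<integral>\<^sup>+S. Y S \<partial>M) \<le> 1" by (simp add: P.emeasure_space_1)
  define A where "A = {S \<in> space M. ennreal \<delta> * Y S < 1}"
  have A_sets: "A \<in> sets M" unfolding A_def by measurable
  have "1 - \<delta> \<le> measure M A"
    unfolding A_def using EY \<open>0 < \<delta>\<close> by (intro M.Markov_prob_mult_lt_1) auto
  moreover have "ereal (\<integral>f. Phi S f \<partial>Q) \<le> KL Q P + ereal (ln (1 / \<delta>))"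
    if "S \<in> A" and Q: "prob_space Q" "sets Q = sets P" for S Q
  proof -
    interpret Q: prob_space Q by fact
    have S: "S \<in> space M" and small: "ennreal \<delta> * Y S < 1" using \<open>S \<in> A\<close> by (auto simp: A_def)
    obtain B where B: "\<forall>f\<in>space P. \<bar>Phi S f\<bar> \<le> B" using Phi_bounded[OF S] by blast
    have Phi_S_meas: "Phi S \<in> borel_measurable P"
      using measurable_Pair2[OF Phi_meas S] by simp
    have "(\<integral>\<^sup>+f. ennreal (exp (Phi S f + ln \<delta>)) \<partial>P) = ennreal \<delta> * Y S"
      unfolding Y_def using \<open>0 < \<delta>\<close> Phi_S_meas
      by (subst nn_integral_cmult[symmetric])
         (auto intro!: nn_integral_cong simp: exp_add ennreal_mult' mult.commute)
    then have "ereal (\<integral>f. Phi S f + ln \<delta> \<partial>Q) \<le> KL Q P"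
      using small B Phi_S_meas
      by (intro KL_ge_integral[OF P Q, where B = "B + \<bar>ln \<delta>\<bar>"]) auto
    moreover have "integrable Q (Phi S)"
      using B Phi_S_meas sets_eq_imp_space_eq[OF Q(2)]
      by (intro Q.integrable_const_bound[where B=B]) (auto cong: measurable_cong_sets[OF Q(2)])
    ultimately show ?thesis
      by (cases "KL Q P") (use \<open>0 < \<delta>\<close> in \<open>simp_all add: Q.prob_space ln_div\<close>)
  qed
  ultimately show ?thesis using A_sets by blast
qed

lemma (in prob_space) exp_moment_zero_one_le_1:
  assumes g_meas: "g \<in> borel_measurable M" and g_01: "\<And>x. x \<in> space M \<Longrightarrow> g x \<in> {0, 1}"
    and tilt: "t - 1 + exp (- s) \<le> 0"
  shows "(\<integral>\<^sup>+x. ennreal (exp (t * expectation g - s * g x)) \<partial>M) \<le> 1"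
proof -
  define p where "p = expectation g"
  have g_int: "integrable M g"
    by (intro integrable_const_bound[where B=1] g_meas) (use g_01 in \<open>fastforce intro!: AE_I2\<close>)
  have "0 \<le> p"
    unfolding p_def by (intro integral_nonneg_AE) (use g_01 in \<open>fastforce intro!: AE_I2\<close>)
  have linear: "exp (t * p - s * g x) = exp (t * p) * (1 - (1 - exp (- s)) * g x)" if "x \<in> space M" for x
    using g_01[OF that] by (auto simp: exp_diff exp_minus field_simps)
  have exp_int: "integrable M (\<lambda>x. exp (t * p - s * g x))"
    using g_int by (subst Bochner_Integration.integrable_cong[OF refl linear]) auto
  have "(\<integral>x. exp (t * p - s * g x) \<partial>M) = (\<integral>x. exp (t * p) * (1 - (1 - exp (- s)) * g x) \<partial>M)"
    by (intro Bochner_Integration.integral_cong) (simp_all add: linear del: exp_diff)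
  also have "\<dots> = exp (t * p) * (1 - (1 - exp (- s)) * p)"
    using g_int by (simp add: prob_space p_def)
  also have "\<dots> \<le> exp (t * p) * exp ((exp (- s) - 1) * p)"
    using exp_ge_add_one_self[of "(exp (- s) - 1) * p"]
    by (intro mult_left_mono) (simp_all add: algebra_simps)
  also have "\<dots> = exp (p * (t - 1 + exp (- s)))"
    by (simp add: exp_add[symmetric] algebra_simps)
  also have "\<dots> \<le> 1"
    using \<open>0 \<le> p\<close> tilt by (simp add: mult_nonneg_nonpos)
  finally show ?thesis
    using exp_int by (simp add: nn_integral_eq_integral p_def)
qed

lemma exp_moment_sample_zero_one_le_1:
  fixes m :: nat
  assumes D: "prob_space D" and g_meas: "g \<in> borel_measurable D"
    and g_01: "\<And>z. z \<in> space D \<Longrightarrow> g z \<in> {0, 1}" and tilt: "t - 1 + exp (- s) \<le> 0"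
  shows "(\<integral>\<^sup>+S. ennreal (exp (\<Sum>i<m. t * (\<integral>z. g z \<partial>D) - s * g (S i))) \<partial>PiM {..<m} (\<lambda>_. D)) \<le> 1"
proof -
  interpret D: prob_space D by fact
  interpret product_prob_space "\<lambda>_. D" "{..<m}" ..
  have "(\<integral>\<^sup>+S. ennreal (exp (\<Sum>i<m. t * (\<integral>z. g z \<partial>D) - s * g (S i))) \<partial>PiM {..<m} (\<lambda>_. D))
      = (\<integral>\<^sup>+S. (\<Prod>i<m. ennreal (exp (t * (\<integral>z. g z \<partial>D) - s * g (S i)))) \<partial>PiM {..<m} (\<lambda>_. D))"
    by (intro nn_integral_cong) (simp add: exp_sum prod_ennreal del: exp_diff)
  also have "\<dots> = (\<Prod>i<m. \<integral>\<^sup>+z. ennreal (exp (t * (\<integral>z. g z \<partial>D) - s * g z)) \<partial>D)"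
    using g_meas by (intro product_nn_integral_prod) auto
  also have "\<dots> \<le> 1"
    using D.exp_moment_zero_one_le_1[OF g_meas g_01 tilt] by (intro prod_le_1) auto
  finally show ?thesis .
qed

lemma (in prob_space) sq_deviation_zero_one_ge:
  fixes X :: "'a \<Rightarrow> real"
  assumes X_meas: "X \<in> borel_measurable M" and X_01: "\<And>x. x \<in> space M \<Longrightarrow> X x \<in> {0, 1}"
    and "h\<^sup>2 \<le> 1"
  shows "h\<^sup>2 * expectation X \<le> expectation (\<lambda>x. (X x - (1 + h) * expectation X)\<^sup>2)"
proof -
  define l where "l = expectation X"
  have X_int: "integrable M X"
    by (intro integrable_const_bound[where B=1] X_meas) (use X_01 in \<open>fastforce intro!: AE_I2\<close>)
  have "0 \<le> l" "l \<le> 1"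
    unfolding l_def
    by (auto intro!: integral_nonneg_AE integral_le_const[OF X_int] AE_I2 dest!: X_01)
  have "expectation (\<lambda>x. (X x - (1 + h) * l)\<^sup>2) = expectation (\<lambda>x. X x * (1 - 2 * (1 + h) * l) + ((1 + h) * l)\<^sup>2)"
    using X_01 by (intro Bochner_Integration.integral_cong) (auto simp: power2_eq_square algebra_simps)
  also have "\<dots> = h\<^sup>2 * l + (1 - h\<^sup>2) * (l - l\<^sup>2)"
    using X_int by (simp add: prob_space l_def power2_eq_square algebra_simps)
  also have "\<dots> \<ge> h\<^sup>2 * l"
    using \<open>0 \<le> l\<close> \<open>l \<le> 1\<close> \<open>h\<^sup>2 \<le> 1\<close> by (simp add: power2_eq_square mult_left_le)
  finally show ?thesis by (simp add: l_def)
qed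

lemma real_risk_bound_from_tilted_gap:
  fixes c h \<delta> K R L F :: real and m :: nat
  defines "x \<equiv> c * h\<^sup>2"
  assumes "0 < c" "0 < h" "h < 1" "0 < m" "0 < \<delta>" "\<delta> < 1" "0 \<le> K"
    and flat: "h\<^sup>2 * L \<le> F"
    and gap: "real m * (x / (1 + x) * R - x * L) \<le> K + ln (1 / \<delta>)"
  shows "R \<le> L + c * F + 4 / (2 * h ^ 4 * c / (1 + 16 * h\<^sup>2 * c) * real m) * (3 * K + ln (1 / \<delta>) + 5)"
proof -
  define C where "C = 2 * h ^ 4 * c / (1 + 16 * h\<^sup>2 * c)"
  define W where "W = K + ln (1 / \<delta>)"
  have "0 < x" unfolding x_def using \<open>0 < c\<close> \<open>0 < h\<close> by simp
  have "0 < C" unfolding C_def using \<open>0 < c\<close> \<open>0 < h\<close> by (simp add: add_pos_pos)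
  have "0 < ln (1 / \<delta>)" using \<open>0 < \<delta>\<close> \<open>\<delta> < 1\<close> by simp
  then have "0 \<le> W" unfolding W_def using \<open>0 \<le> K\<close> by simp
  have "h\<^sup>2 \<le> 1" using \<open>0 < h\<close> \<open>h < 1\<close> by (simp add: power_le_one)
  have "R \<le> (1 + x) * L + (1 + x) / x * W / real m"
    using gap \<open>0 < x\<close> \<open>0 < m\<close> unfolding W_def by (simp add: field_simps)
  moreover have "(1 + x) * L \<le> L + c * F"
    using flat \<open>0 < c\<close> unfolding x_def by (simp add: algebra_simps mult_left_mono)
  moreover have "(1 + x) / x \<le> 4 / C"
  proof -
    have "h\<^sup>2 * (1 + x) \<le> 1 * (1 + x)"
      using \<open>h\<^sup>2 \<le> 1\<close> \<open>0 < x\<close> by (intro mult_right_mono) auto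
    then have "h\<^sup>2 * (1 + x) \<le> 2 * (1 + 16 * x)"
      using \<open>0 < x\<close> by (simp add: algebra_simps)
    then have "(1 + x) / x \<le> 2 * (1 + 16 * x) / (h\<^sup>2 * x)"
      using \<open>0 < x\<close> \<open>0 < h\<close> by (simp add: divide_simps) (simp add: algebra_simps)
    also have "\<dots> = 4 / C"
      using \<open>0 < c\<close> \<open>0 < h\<close> by (simp add: C_def x_def field_simps power2_eq_square power4_eq_xxxx)
    finally show ?thesis .
  qed
  then have "(1 + x) / x * W / real m \<le> 4 / C * (3 * K + ln (1 / \<delta>) + 5) / real m"
    using \<open>0 \<le> W\<close> \<open>0 \<le> K\<close> \<open>0 < C\<close> unfolding W_def
    by (intro divide_right_mono mult_mono) auto
  ultimately show ?thesis by (simp add: C_def)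
qed

lemma risk_bound_from_tilted_gap:
  fixes c h \<delta> R L F :: real and K :: ereal and m :: nat
  defines "x \<equiv> c * h\<^sup>2"
  assumes "0 < c" "0 < h" "h < 1" "0 < m" "0 < \<delta>" "\<delta> < 1" "0 \<le> K"
    and flat: "h\<^sup>2 * L \<le> F"
    and gap: "ereal (real m * (x / (1 + x) * R - x * L)) \<le> K + ereal (ln (1 / \<delta>))"
  shows "let C = 2 * h ^ 4 * c / (1 + 16 * h\<^sup>2 * c) in
           ereal R \<le> ereal (L + c * F) + ereal (4 / (C * real m)) * (3 * K + ereal (ln (1 / \<delta>)) + 5)"
proof (cases K)
  case (real k)
  with assms have "R \<le> L + c * F + 4 / (2 * h ^ 4 * c / (1 + 16 * h\<^sup>2 * c) * real m) * (3 * k + ln (1 / \<delta>) + 5)"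
    by (intro real_risk_bound_from_tilted_gap) auto
  with real show ?thesis by (simp add: Let_def) (simp add: algebra_simps)
next
  case PInf
  define a where "a = 4 / (2 * h ^ 4 * c / (1 + 16 * h\<^sup>2 * c) * real m)"
  have "0 < a" unfolding a_def using assms by (simp add: add_pos_pos)
  with PInf show ?thesis unfolding Let_def a_def[symmetric] by simp
qed (use \<open>0 \<le> K\<close> in simp)

definition weighted_risk_gap ::
    "'z measure \<Rightarrow> nat \<Rightarrow> real \<Rightarrow> real \<Rightarrow> (nat \<Rightarrow> 'z) \<Rightarrow> ('z \<Rightarrow> real) \<Rightarrow> real" where
  "weighted_risk_gap D m t s S f = (\<Sum>i<m. t * true_risk D f - s * f (S i))"

locale zero_one_loss_class = D: prob_space D
  for D :: "'z measure" and MF :: "('z \<Rightarrow> real) measure" +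
  assumes loss_measurable: "\<And>f. f \<in> space MF \<Longrightarrow> f \<in> borel_measurable D"
    and loss_01: "\<And>f z. f \<in> space MF \<Longrightarrow> z \<in> space D \<Longrightarrow> f z \<in> {0, 1}"
    and eval_measurable: "(\<lambda>(f, z). f z) \<in> borel_measurable (MF \<Otimes>\<^sub>M D)"
begin

lemma measurable_eval_at: "z \<in> space D \<Longrightarrow> (\<lambda>f. f z) \<in> borel_measurable MF"
  using measurable_Pair1[OF eval_measurable] by simp

lemma measurable_true_risk: "true_risk D \<in> borel_measurable MF"
  using D.borel_measurable_lebesgue_integral[OF eval_measurable]
  by (simp add: true_risk_def[abs_def])

lemma true_risk_bounds:
  assumes "f \<in> space MF"
  shows "0 \<le> true_risk D f" "true_risk D f \<le> 1"
proof -
  have f_int: "integrable D f"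
    by (intro D.integrable_const_bound[where B=1] loss_measurable[OF assms])
       (use loss_01[OF assms] in \<open>fastforce intro!: AE_I2\<close>)
  show "0 \<le> true_risk D f" "true_risk D f \<le> 1"
    unfolding true_risk_def
    by (auto intro!: integral_nonneg_AE D.integral_le_const[OF f_int] AE_I2 dest!: loss_01[OF assms])
qed

lemma measurable_weighted_risk_gap:
  "(\<lambda>(S, f). weighted_risk_gap D m t s S f) \<in> borel_measurable (PiM {..<m} (\<lambda>_. D) \<Otimes>\<^sub>M MF)"
proof -
  have "(\<lambda>(S, f). f (S i)) \<in> borel_measurable (PiM {..<m} (\<lambda>_. D) \<Otimes>\<^sub>M MF)" if "i < m" for i
  proof -
    have [measurable]: "i \<in> {..<m}" using that by simp
    have "(\<lambda>(S, f). (f, S i)) \<in> measurable (PiM {..<m} (\<lambda>_. D) \<Otimes>\<^sub>M MF) (MF \<Otimes>\<^sub>M D)"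
      by measurable
    from measurable_comp[OF this eval_measurable] show ?thesis
      by (simp add: o_def split_beta')
  qed
  then show ?thesis
    unfolding weighted_risk_gap_def split_beta' using measurable_true_risk
    by (intro borel_measurable_sum borel_measurable_diff borel_measurable_times) auto
qed

lemma weighted_risk_gap_bounded:
  assumes "\<And>i. i < m \<Longrightarrow> S i \<in> space D" and "f \<in> space MF"
  shows "\<bar>weighted_risk_gap D m t s S f\<bar> \<le> real m * (\<bar>t\<bar> + \<bar>s\<bar>)"
proof -
  have "\<bar>t * true_risk D f - s * f (S i)\<bar> \<le> \<bar>t\<bar> + \<bar>s\<bar>" if "i < m" for i
  proof -
    have "\<bar>true_risk D f\<bar> \<le> 1" "\<bar>f (S i)\<bar> \<le> 1"
      using true_risk_bounds[OF \<open>f \<in> space MF\<close>] loss_01[OF \<open>f \<in> space MF\<close> assms(1)[OF that]]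
      by auto
    then show ?thesis
      by (auto simp: abs_mult intro!: abs_triangle_ineq4[THEN order.trans] add_mono
          mult_left_le[of _ "\<bar>t\<bar>"] mult_left_le[of _ "\<bar>s\<bar>"])
  qed
  then show ?thesis
    unfolding weighted_risk_gap_def
    by (intro order.trans[OF sum_abs] order.trans[OF sum_bounded_above[of _ _ "\<bar>t\<bar> + \<bar>s\<bar>"]]) auto
qed

lemma exp_moment_weighted_risk_gap_le_1:
  assumes "f \<in> space MF" and "t - 1 + exp (- s) \<le> 0"
  shows "(\<integral>\<^sup>+S. ennreal (exp (weighted_risk_gap D m t s S f)) \<partial>PiM {..<m} (\<lambda>_. D)) \<le> 1"
  unfolding weighted_risk_gap_def true_risk_def
  using loss_measurable[OF assms(1)] loss_01[OF assms(1)] assms(2)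
  by (rule exp_moment_sample_zero_one_le_1[OF D.prob_space_axioms])

context
  fixes Q :: "('z \<Rightarrow> real) measure"
  assumes Q: "prob_space Q" and sets_Q: "sets Q = sets MF"
begin

interpretation Q: prob_space Q by (fact Q)

private lemma space_Q: "space Q = space MF"
  using sets_Q by (rule sets_eq_imp_space_eq)

lemma integrable_true_risk: "integrable Q (true_risk D)"
  using measurable_true_risk true_risk_bounds
  by (intro Q.integrable_const_bound[where B=1])
     (auto intro!: AE_I2 simp: space_Q cong: measurable_cong_sets[OF sets_Q])

lemma integrable_eval_at:
  assumes "z \<in> space D"
  shows "integrable Q (\<lambda>f. f z)"
  using measurable_eval_at[OF assms] loss_01[OF _ assms]
  by (intro Q.integrable_const_bound[where B=1])
     (fastforce intro!: AE_I2 simp: space_Q cong: measurable_cong_sets[OF sets_Q])+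

lemma integral_weighted_risk_gap:
  assumes S: "\<And>i. i < m \<Longrightarrow> S i \<in> space D"
  shows "(\<integral>f. weighted_risk_gap D m t s S f \<partial>Q) = real m * (t * gibbs_risk D Q - s * emp_gibbs_risk Q m S)"
proof -
  have "(\<integral>f. weighted_risk_gap D m t s S f \<partial>Q) = (\<Sum>i<m. t * gibbs_risk D Q - s * gibbs_loss Q (S i))"
    unfolding weighted_risk_gap_def gibbs_risk_def gibbs_loss_def
    using integrable_true_risk integrable_eval_at[OF S] by (subst Bochner_Integration.integral_sum) auto
  then show ?thesis
    by (simp add: emp_gibbs_risk_def sum_subtractf sum_distrib_left algebra_simps)
qed

lemma flatness_ge_emp_gibbs_risk:
  assumes S: "\<And>i. i < m \<Longrightarrow> S i \<in> space D" and "h\<^sup>2 \<le> 1"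
  shows "h\<^sup>2 * emp_gibbs_risk Q m S \<le> flatness h Q m S"
proof -
  have "h\<^sup>2 * gibbs_loss Q (S i) \<le> (\<integral>f. (f (S i) - (1 + h) * gibbs_loss Q (S i))\<^sup>2 \<partial>Q)"
    if "i < m" for i
    unfolding gibbs_loss_def
    using measurable_eval_at[OF S[OF that]] loss_01[OF _ S[OF that]] \<open>h\<^sup>2 \<le> 1\<close>
    by (intro Q.sq_deviation_zero_one_ge) (auto simp: space_Q cong: measurable_cong_sets[OF sets_Q])
  then show ?thesis
    unfolding emp_gibbs_risk_def flatness_def
    by (auto simp: sum_distrib_left intro!: sum_mono divide_right_mono)
qed

end

lemma pac_bayes_weighted_risk_gap:
  assumes P: "prob_space P" and P_sets: "sets P = sets MF" and "0 < \<delta>"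
    and tilt: "t - 1 + exp (- s) \<le> 0"
  shows "\<exists>A\<in>sets (PiM {..<m} (\<lambda>_. D)). 1 - \<delta> \<le> measure (PiM {..<m} (\<lambda>_. D)) A \<and>
           (\<forall>S\<in>A. \<forall>Q. prob_space Q \<and> sets Q = sets MF \<longrightarrow>
              ereal (real m * (t * gibbs_risk D Q - s * emp_gibbs_risk Q m S))
                \<le> KL Q P + ereal (ln (1 / \<delta>)))"
proof -
  have space_P: "space P = space MF" using P_sets by (rule sets_eq_imp_space_eq)
  have sample: "S i \<in> space D" if "S \<in> space (PiM {..<m} (\<lambda>_. D))" "i < m" for S i
    using that by (auto simp: space_PiM)
  have "(\<lambda>(S, f). weighted_risk_gap D m t s S f) \<in> borel_measurable (PiM {..<m} (\<lambda>_. D) \<Otimes>\<^sub>M P)"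
    unfolding measurable_cong_sets[OF sets_pair_measure_cong[OF refl P_sets] refl]
    by (rule measurable_weighted_risk_gap)
  moreover have "\<exists>B. \<forall>f\<in>space P. \<bar>weighted_risk_gap D m t s S f\<bar> \<le> B"
    if "S \<in> space (PiM {..<m} (\<lambda>_. D))" for S
    using weighted_risk_gap_bounded[of m S] sample[OF that] by (auto simp: space_P)
  moreover have "(\<integral>\<^sup>+S. ennreal (exp (weighted_risk_gap D m t s S f)) \<partial>PiM {..<m} (\<lambda>_. D)) \<le> 1"
    if "f \<in> space P" for f
    using exp_moment_weighted_risk_gap_le_1[OF _ tilt] that by (simp add: space_P)
  ultimately obtain A where A_sets: "A \<in> sets (PiM {..<m} (\<lambda>_. D))"
    and "1 - \<delta> \<le> measure (PiM {..<m} (\<lambda>_. D)) A"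
    and A: "\<And>S Q. S \<in> A \<Longrightarrow> prob_space Q \<Longrightarrow> sets Q = sets P \<Longrightarrow>
      ereal (\<integral>f. weighted_risk_gap D m t s S f \<partial>Q) \<le> KL Q P + ereal (ln (1 / \<delta>))"
    using pac_bayes_bound[OF prob_space_PiM[OF D.prob_space_axioms] P \<open>0 < \<delta>\<close>] by metis
  moreover have "S i \<in> space D" if "S \<in> A" "i < m" for S i
    using sample sets.sets_into_space[OF A_sets] that by blast
  ultimately show ?thesis
    using integral_weighted_risk_gap P_sets by (metis (no_types, lifting))
qed

end

theorem mainTheorem2:
  fixes D :: "'z measure" and MF :: "('z \<Rightarrow> real) measure"
    and P :: "('z \<Rightarrow> real) measure"
    and m :: nat and c h \<delta> :: real
  assumes D_prob: "prob_space D"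
    and F_meas: "\<forall>f\<in>space MF. f \<in> borel_measurable D"
    and F_01: "\<forall>f\<in>space MF. \<forall>z\<in>space D. f z \<in> {0, 1}"
    and eval_meas: "(\<lambda>(f, z). f z) \<in> borel_measurable (MF \<Otimes>\<^sub>M D)"
    and P_prob: "prob_space P" and P_sets: "sets P = sets MF"
    and m_pos: "m > 0"
    and c_pos: "c > 0"
    and h_pos: "0 < h" and h_lt1: "h < 1"
    and \<delta>_pos: "0 < \<delta>" and \<delta>_lt1: "\<delta> < 1"
  shows "\<exists>A \<in> sets (PiM {..<m} (\<lambda>_. D)).
           measure (PiM {..<m} (\<lambda>_. D)) A \<ge> 1 - \<delta> \<and>
           (\<forall>S\<in>A. \<forall>Q. prob_space Q \<and> sets Q = sets MF \<longrightarrow>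
              (let C = 2 * h ^ 4 * c / (1 + 16 * h\<^sup>2 * c) in
               ereal (gibbs_risk D Q)
                 \<le> ereal (emp_gibbs_risk Q m S + c * flatness h Q m S)
                   + ereal (4 / (C * real m)) * (3 * KL Q P + ereal (ln (1 / \<delta>)) + 5)))"
proof -
  interpret zero_one_loss_class D MF
    using D_prob F_meas F_01 eval_meas by (simp add: zero_one_loss_class_def zero_one_loss_class_axioms_def)
  define x where "x = c * h\<^sup>2"
  have "0 < x" using c_pos h_pos by (simp add: x_def)
  then have "exp (- x) \<le> 1 / (1 + x)"
    using exp_ge_add_one_self[of x] by (simp add: exp_minus field_simps)
  then have tilt: "x / (1 + x) - 1 + exp (- x) \<le> 0"
    using \<open>0 < x\<close> by (simp add: field_simps)
  obtain A where A_sets: "A \<in> sets (PiM {..<m} (\<lambda>_. D))" and "1 - \<delta> \<le> measure (PiM {..<m} (\<lambda>_. D)) A"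
    and gap: "\<forall>S\<in>A. \<forall>Q. prob_space Q \<and> sets Q = sets MF \<longrightarrow>
      ereal (real m * (x / (1 + x) * gibbs_risk D Q - x * emp_gibbs_risk Q m S)) \<le> KL Q P + ereal (ln (1 / \<delta>))"
    using pac_bayes_weighted_risk_gap[OF P_prob P_sets \<delta>_pos tilt] by blast
  show ?thesis
  proof (intro bexI conjI ballI allI impI)
    fix S Q assume "S \<in> A" and Q: "prob_space Q \<and> sets Q = sets MF"
    then have "S i \<in> space D" if "i < m" for i
      using sets.sets_into_space[OF A_sets] that by (auto simp: space_PiM)
    then have "h\<^sup>2 * emp_gibbs_risk Q m S \<le> flatness h Q m S"
      using Q h_pos h_lt1 by (intro flatness_ge_emp_gibbs_risk) (auto simp: power_le_one)
    moreover have "0 \<le> KL Q P" using KL_nonneg[OF P_prob] Q P_sets by auto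
    ultimately show "let C = 2 * h ^ 4 * c / (1 + 16 * h\<^sup>2 * c) in
               ereal (gibbs_risk D Q)
                 \<le> ereal (emp_gibbs_risk Q m S + c * flatness h Q m S)
                   + ereal (4 / (C * real m)) * (3 * KL Q P + ereal (ln (1 / \<delta>)) + 5)"
      using gap \<open>S \<in> A\<close> Q unfolding x_def
      by (intro risk_bound_from_tilted_gap[OF c_pos h_pos h_lt1 m_pos \<delta>_pos \<delta>_lt1]) auto
  qed fact+
qed

end
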